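(* Let $M$ be a left $H$-module with action $\triangleright$, and let $T\in\mathrm{End}_k(M)$ be a linear projection ($T^2=T$) such that $T_h\circ T=T\circ T_h$ for all $h\in H$, where $T_h(m)=h_{(1)}\triangleright T(S(h_{(2)})\triangleright m)$. Then the linear map $\pi:H\to\mathrm{End}_k(T(M))$, $\pi(h)(m)=T(h\triangleright m)$ for $m\in T(M)$, is a partial representation of $H$. Thus $(T(M),\pi)$ is a partial $H$-module.
   Context: Throughout, $k$ is a field and $H$ is a Hopf algebra over $k$ with bijective antipode $S$ and Sweedler notation $\Delta(h)=h_{(1)}\otimes h_{(2)}$. A partial representation of $H$ on a vector space $V$ is a linear map $\pi:H\to\mathrm{End}_k(V)$ satisfying, for all $h,k\in H$: - $\pi(1_H)=\mathrm{id}_V$; - $\pi(h)\pi(k_{(1)})\pi(S(k_{(2)}))=\pi(hk_{(1)})\pi(S(k_{(2)}))$; - $\pi(h_{(1)})\pi(S(h_{(2)}))\pi(k)=\pi(h_{(1)})\pi(S(h_{(2)})k)$; - $\pi(h)\pi(S(k_{(1)}))\pi(k_{(2)})=\pi(hS(k_{(1)}))\pi(k_{(2)})$; - $\pi(S(h_{(1)}))\pi(h_{(2)})\pi(k)=\pi(S(h_{(1)}))\pi(h_{(2)}k)$. *)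

theory Defs
  imports Main "HOL.Vector_Spaces"
begin

(* Elements of H \<otimes> H (resp. H \<otimes> H \<otimes> H) are represented by finite lists of
   simple tensors. Over a field, two such finite sums are equal in the tensor
   product iff they agree under all products of linear functionals. *)

definition tensor2_eq ::
  "('k::field \<Rightarrow> 'h::ab_group_add \<Rightarrow> 'h) \<Rightarrow> ('h \<times> 'h) list \<Rightarrow> ('h \<times> 'h) list \<Rightarrow> bool" where
  "tensor2_eq sc xs ys \<longleftrightarrow>
     (\<forall>f g. Vector_Spaces.linear sc (*) f \<longrightarrow> Vector_Spaces.linear sc (*) g \<longrightarrow>
        (\<Sum>(a,b)\<leftarrow>xs. f a * g b) = (\<Sum>(a,b)\<leftarrow>ys. f a * g b))"

definition tensor3_eq ::
  "('k::field \<Rightarrow> 'h::ab_group_add \<Rightarrow> 'h) \<Rightarrow> ('h \<times> 'h \<times> 'h) list \<Rightarrow> ('h \<times> 'h \<times> 'h) list \<Rightarrow> bool" where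
  "tensor3_eq sc xs ys \<longleftrightarrow>
     (\<forall>f g l. Vector_Spaces.linear sc (*) f \<longrightarrow> Vector_Spaces.linear sc (*) g \<longrightarrow> Vector_Spaces.linear sc (*) l \<longrightarrow>
        (\<Sum>(a,b,c)\<leftarrow>xs. f a * g b * l c) = (\<Sum>(a,b,c)\<leftarrow>ys. f a * g b * l c))"

(* Hopf algebra over the field 'k with bijective antipode.
   sc: scalar multiplication; Delta h: a Sweedler representation
   [(h_(1),h_(2)),...] of the comultiplication; eps: counit; S: antipode. *)
locale hopf_algebra =
  vector_space sc
  for sc :: "'k::field \<Rightarrow> 'h::ring_1 \<Rightarrow> 'h"
  and Delta :: "'h \<Rightarrow> ('h \<times> 'h) list"
  and eps :: "'h \<Rightarrow> 'k"
  and S :: "'h \<Rightarrow> 'h" +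
  assumes sc_mult_left: "sc c (x * y) = sc c x * y"
    and sc_mult_right: "sc c (x * y) = x * sc c y"
    and Delta_add: "tensor2_eq sc (Delta (x + y)) (Delta x @ Delta y)"
    and Delta_scale: "tensor2_eq sc (Delta (sc c x)) (map (\<lambda>(a,b). (sc c a, b)) (Delta x))"
    and coassoc: "tensor3_eq sc
        (concat (map (\<lambda>(a,b). map (\<lambda>(a1,a2). (a1,a2,b)) (Delta a)) (Delta h)))
        (concat (map (\<lambda>(a,b). map (\<lambda>(b1,b2). (a,b1,b2)) (Delta b)) (Delta h)))"
    and Delta_mult: "tensor2_eq sc (Delta (x * y))
        (concat (map (\<lambda>(a,b). map (\<lambda>(c,d). (a * c, b * d)) (Delta y)) (Delta x)))"
    and Delta_one: "tensor2_eq sc (Delta 1) [(1,1)]"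
    and eps_linear: "Vector_Spaces.linear sc (*) eps"
    and eps_mult: "eps (x * y) = eps x * eps y"
    and eps_one: "eps 1 = 1"
    and counit_left: "(\<Sum>(a,b)\<leftarrow>Delta h. sc (eps a) b) = h"
    and counit_right: "(\<Sum>(a,b)\<leftarrow>Delta h. sc (eps b) a) = h"
    and S_linear: "Vector_Spaces.linear sc sc S"
    and antipode_left: "(\<Sum>(a,b)\<leftarrow>Delta h. S a * b) = sc (eps h) 1"
    and antipode_right: "(\<Sum>(a,b)\<leftarrow>Delta h. a * S b) = sc (eps h) 1"
    and S_bij: "bij S"

locale hopf_module = hopf_algebra sc Delta eps S
  for sc :: "'k::field \<Rightarrow> 'h::ring_1 \<Rightarrow> 'h"
  and Delta :: "'h \<Rightarrow> ('h \<times> 'h) list"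
  and eps :: "'h \<Rightarrow> 'k"
  and S :: "'h \<Rightarrow> 'h" +
  fixes scM :: "'k \<Rightarrow> 'm::ab_group_add \<Rightarrow> 'm"
  and act :: "'h \<Rightarrow> 'm \<Rightarrow> 'm"
  assumes M_vs: "vector_space scM"
    and act_linear_right: "Vector_Spaces.linear scM scM (act h)"
    and act_linear_left: "Vector_Spaces.linear sc scM (\<lambda>h. act h m)"
    and act_one: "act 1 m = m"
    and act_mult: "act (x * y) m = act x (act y m)"

(* Partial representation of H on the subspace V of the k-vector space 'm:
   pi h is (the restriction to V of) an element of End_k(V). *)
definition partial_rep ::
  "('k::field \<Rightarrow> 'h::ring_1 \<Rightarrow> 'h) \<Rightarrow> ('h \<Rightarrow> ('h \<times> 'h) list) \<Rightarrow> ('h \<Rightarrow> 'h)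
   \<Rightarrow> ('k \<Rightarrow> 'm::ab_group_add \<Rightarrow> 'm) \<Rightarrow> 'm set \<Rightarrow> ('h \<Rightarrow> 'm \<Rightarrow> 'm) \<Rightarrow> bool" where
  "partial_rep sc Delta S scM V pi \<longleftrightarrow>
     module.subspace scM V
   \<and> (\<forall>h. \<forall>v\<in>V. pi h v \<in> V)
   \<and> (\<forall>h. \<forall>v\<in>V. \<forall>w\<in>V. pi h (v + w) = pi h v + pi h w)
   \<and> (\<forall>h c. \<forall>v\<in>V. pi h (scM c v) = scM c (pi h v))
   \<and> (\<forall>x y. \<forall>v\<in>V. pi (x + y) v = pi x v + pi y v)
   \<and> (\<forall>x c. \<forall>v\<in>V. pi (sc c x) v = scM c (pi x v))
   \<and> (\<forall>v\<in>V. pi 1 v = v)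
   \<and> (\<forall>h k. \<forall>v\<in>V. (\<Sum>(a,b)\<leftarrow>Delta k. pi h (pi a (pi (S b) v)))
                  = (\<Sum>(a,b)\<leftarrow>Delta k. pi (h * a) (pi (S b) v)))
   \<and> (\<forall>h k. \<forall>v\<in>V. (\<Sum>(a,b)\<leftarrow>Delta h. pi a (pi (S b) (pi k v)))
                  = (\<Sum>(a,b)\<leftarrow>Delta h. pi a (pi (S b * k) v)))
   \<and> (\<forall>h k. \<forall>v\<in>V. (\<Sum>(a,b)\<leftarrow>Delta k. pi h (pi (S a) (pi b v)))
                  = (\<Sum>(a,b)\<leftarrow>Delta k. pi (h * S a) (pi b v)))
   \<and> (\<forall>h k. \<forall>v\<in>V. (\<Sum>(a,b)\<leftarrow>Delta h. pi (S a) (pi b (pi k v)))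
                  = (\<Sum>(a,b)\<leftarrow>Delta h. pi (S a) (pi (b * k) v)))"

definition T_twist ::
  "('h \<Rightarrow> ('h \<times> 'h) list) \<Rightarrow> ('h \<Rightarrow> 'h) \<Rightarrow> ('h \<Rightarrow> 'm \<Rightarrow> 'm::ab_group_add)
   \<Rightarrow> ('m \<Rightarrow> 'm) \<Rightarrow> 'h \<Rightarrow> 'm \<Rightarrow> 'm" where
  "T_twist Delta S act T h m = (\<Sum>(a,b)\<leftarrow>Delta h. act a (T (act (S b) m)))"

end

theory Submission
  imports Defs
begin

text \<open>Write \<open>\<pi>(h) = T \<circ> (h \<triangleright> -)\<close> and \<open>U\<^sub>h(m) = S(h\<^sub>1) \<triangleright> T(h\<^sub>2 \<triangleright> m)\<close>
  (\<open>cotwist\<close> below; \<open>T\<^sub>h\<close> is \<open>twist\<close>).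
  Then \<open>\<pi>(h\<^sub>1)\<pi>(S h\<^sub>2) = T \<circ> T\<^sub>h\<close> and \<open>\<pi>(S h\<^sub>1)\<pi>(h\<^sub>2) = T \<circ> U\<^sub>h\<close> on \<open>T(M)\<close>,
  so once \<open>T\<close> commutes with every \<open>T\<^sub>h\<close> and every \<open>U\<^sub>h\<close>, each of the four axioms
  of a partial representation reduces to \<open>T\<^sup>2 = T\<close>. Commutation with \<open>T\<^sub>h\<close> is the
  hypothesis; commutation with \<open>U\<^sub>h\<close> follows from it by coassociativity together with
  the identities \<open>T(S(h) \<triangleright> m) = S(h\<^sub>1) \<triangleright> T\<^bsub>h\<^sub>2\<^esub>(m)\<close> and
  \<open>T\<^bsub>k\<^sub>1\<^esub>(k\<^sub>2 \<triangleright> m) = k \<triangleright> T(m)\<close>, both consequences of the antipode and counit axioms.\<close>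

lemma linear_additive: "Vector_Spaces.linear s1 s2 f \<Longrightarrow> f (x + y) = f x + f y"
  by (simp add: linear_iff)

lemma linear_homogeneous: "Vector_Spaces.linear s1 s2 f \<Longrightarrow> f (s1 c x) = s2 c (f x)"
  by (simp add: linear_iff)

lemma linear_zero': "Vector_Spaces.linear s1 s2 f \<Longrightarrow> f 0 = 0"
  by (metis module_hom.zero module_hom_iff_linear)

lemma linear_sum': "Vector_Spaces.linear s1 s2 f \<Longrightarrow> f (sum g A) = (\<Sum>x\<in>A. f (g x))"
  by (metis module_hom.sum module_hom_iff_linear)

lemma linear_sum_list:
  assumes "Vector_Spaces.linear s1 s2 f"
  shows "f (\<Sum>x\<leftarrow>xs. g x) = (\<Sum>x\<leftarrow>xs. f (g x))"
proof -
  interpret module_hom s1 s2 f using assms by (simp add: module_hom_iff_linear)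
  show ?thesis by (induction xs) (simp_all add: add zero)
qed

lemma linear_sum_list_prod:
  assumes "Vector_Spaces.linear s1 s2 f"
  shows "f (\<Sum>(a,b)\<leftarrow>xs. g a b) = (\<Sum>(a,b)\<leftarrow>xs. f (g a b))"
  using linear_sum_list[OF assms, of "\<lambda>(a,b). g a b" xs] by (simp add: split_def)

lemma linear_compose':
  "Vector_Spaces.linear s1 s2 f \<Longrightarrow> Vector_Spaces.linear s2 s3 g \<Longrightarrow>
   Vector_Spaces.linear s1 s3 (\<lambda>x. g (f x))"
  using Vector_Spaces.linear_compose[of s1 s2 f s3 g] by (simp add: o_def)

lemma linear_sum_list_fun:
  assumes "vector_space s1" and "vector_space s2"
    and "\<forall>x\<in>set xs. Vector_Spaces.linear s1 s2 (F x)"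
  shows "Vector_Spaces.linear s1 s2 (\<lambda>m. \<Sum>x\<leftarrow>xs. F x m)"
  using assms(3)
proof (induction xs)
  case Nil
  interpret vector_space s2 by fact
  show ?case using assms(1,2) by (simp add: linear_iff)
next
  case (Cons x xs)
  interpret vector_space s2 by fact
  show ?case using Cons assms(1,2) by (simp add: linear_iff scale_right_distrib)
qed

lemma vector_space_field: "vector_space ((*) :: 'k::field \<Rightarrow> 'k \<Rightarrow> 'k)"
  by unfold_locales (simp_all add: algebra_simps)

lemma (in vector_space) finite_set_linear_coordinates:
  assumes "finite A"
  obtains E f where "finite E" "\<And>e. Vector_Spaces.linear scale (*) (f e)"
    "\<And>a. a \<in> A \<Longrightarrow> a = (\<Sum>e\<in>E. f e a *s e)"
proof -
  interpret p: vector_space_pair scale "(*) :: 'a \<Rightarrow> 'a \<Rightarrow> 'a"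
    by (simp add: vector_space_pair_def vector_space_axioms vector_space_field)
  obtain B where B: "B \<subseteq> A" "independent B" "A \<subseteq> span B"
    using maximal_independent_subset by blast
  have finB: "finite B" using B(1) assms finite_subset by blast
  define f where "f e = p.construct B (\<lambda>x. if x = e then 1 else 0)" for e
  have lin: "Vector_Spaces.linear scale (*) (f e)" for e
    unfolding f_def by (rule p.linear_construct[OF B(2)])
  have "a = (\<Sum>e\<in>B. f e a *s e)" if "a \<in> A" for a
  proof -
    obtain u where u: "a = (\<Sum>v\<in>B. u v *s v)"
      using \<open>a \<in> A\<close> B(3) span_finite[OF finB] by blast
    have "f e a = u e" if "e \<in> B" for e
    proof -
      have "f e a = (\<Sum>v\<in>B. u v * f e v)"
        unfolding u by (simp add: linear_sum'[OF lin] linear_homogeneous[OF lin])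
      also have "\<dots> = (\<Sum>v\<in>B. if v = e then u v else 0)"
        by (rule sum.cong) (simp_all add: f_def p.construct_basis[OF B(2)])
      finally show ?thesis using \<open>e \<in> B\<close> finB by simp
    qed
    then show ?thesis using u by simp
  qed
  then show thesis using that finB lin by blast
qed

lemma (in vector_space) sum_list_eq_by_coordinates:
  assumes "finite I"
    and expand: "\<And>x. x \<in> set xs \<union> set ys \<Longrightarrow> F x = (\<Sum>i\<in>I. c i x *s W i)"
    and coordinates: "\<And>i. i \<in> I \<Longrightarrow> (\<Sum>x\<leftarrow>xs. c i x) = (\<Sum>x\<leftarrow>ys. c i x)"
  shows "(\<Sum>x\<leftarrow>xs. F x) = (\<Sum>x\<leftarrow>ys. F x)"
proof -
  have sum_list_eq: "(\<Sum>x\<leftarrow>zs. F x) = (\<Sum>i\<in>I. (\<Sum>x\<leftarrow>zs. c i x) *s W i)"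
    if "\<And>x. x \<in> set zs \<Longrightarrow> F x = (\<Sum>i\<in>I. c i x *s W i)" for zs
    using that by (induction zs) (simp_all add: sum.distrib scale_left_distrib)
  have "(\<Sum>x\<leftarrow>xs. F x) = (\<Sum>i\<in>I. (\<Sum>x\<leftarrow>xs. c i x) *s W i)"
    using expand by (intro sum_list_eq) simp
  also have "\<dots> = (\<Sum>i\<in>I. (\<Sum>x\<leftarrow>ys. c i x) *s W i)"
    using coordinates by simp
  also have "\<dots> = (\<Sum>x\<leftarrow>ys. F x)"
    using expand by (intro sum_list_eq[symmetric]) simp
  finally show ?thesis .
qed

lemma (in vector_space_pair) linear_eq_sum_coordinates:
  assumes "Vector_Spaces.linear s1 s2 \<phi>" and "a = (\<Sum>e\<in>E. c e *a e)"
  shows "\<phi> a = (\<Sum>e\<in>E. c e *b \<phi> e)"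
  using assms by (simp add: linear_sum' linear_homogeneous)

text \<open>Tensor equality is tested against products of linear functionals only. It
  transfers to arbitrary multilinear maps by expanding the finitely many vectors
  involved in coordinates, which turns the multilinear map into a combination of
  such products.\<close>

lemma (in vector_space_pair) tensor2_eq_sum_bilinear:
  assumes "tensor2_eq s1 xs ys"
    and linear1: "\<And>b. Vector_Spaces.linear s1 s2 (\<lambda>a. \<Phi> a b)"
    and linear2: "\<And>a. Vector_Spaces.linear s1 s2 (\<Phi> a)"
  shows "(\<Sum>(a,b)\<leftarrow>xs. \<Phi> a b) = (\<Sum>(a,b)\<leftarrow>ys. \<Phi> a b)"
proof -
  let ?A = "fst ` set (xs @ ys) \<union> snd ` set (xs @ ys)"
  obtain E f where E: "finite E" and f: "\<And>e. Vector_Spaces.linear s1 (*) (f e)"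
    and coord: "\<And>a. a \<in> ?A \<Longrightarrow> a = (\<Sum>e\<in>E. f e a *a e)"
    by (rule vs1.finite_set_linear_coordinates[of ?A]) auto
  have "\<Phi> a b = (\<Sum>(e,e')\<in>E \<times> E. (f e a * f e' b) *b \<Phi> e e')"
    if "(a,b) \<in> set xs \<union> set ys" for a b
  proof -
    have "\<Phi> a b = (\<Sum>e\<in>E. f e a *b \<Phi> e b)"
      using linear1 coord that by (intro linear_eq_sum_coordinates) force+
    also have "\<dots> = (\<Sum>e\<in>E. \<Sum>e'\<in>E. (f e a * f e' b) *b \<Phi> e e')"
    proof (rule sum.cong[OF refl])
      fix e
      have "\<Phi> e b = (\<Sum>e'\<in>E. f e' b *b \<Phi> e e')"
        using linear2 coord that by (intro linear_eq_sum_coordinates) force+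
      then show "f e a *b \<Phi> e b = (\<Sum>e'\<in>E. (f e a * f e' b) *b \<Phi> e e')"
        by (simp add: vs2.scale_sum_right)
    qed
    finally show ?thesis by (simp add: sum.cartesian_product)
  qed
  moreover have "(\<Sum>x\<leftarrow>xs. f e (fst x) * f e' (snd x)) = (\<Sum>x\<leftarrow>ys. f e (fst x) * f e' (snd x))"
    for e e'
    using assms(1) f unfolding tensor2_eq_def by (simp add: split_def)
  ultimately show ?thesis
    using vs2.sum_list_eq_by_coordinates[OF finite_cartesian_product[OF E E],
        of xs ys "\<lambda>(a,b). \<Phi> a b" "\<lambda>(e,e') x. f e (fst x) * f e' (snd x)" "\<lambda>(e,e'). \<Phi> e e'"]
    by (auto simp: split_def)
qed

lemma (in vector_space_pair) tensor3_eq_sum_trilinear: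
  assumes "tensor3_eq s1 xs ys"
    and linear1: "\<And>b d. Vector_Spaces.linear s1 s2 (\<lambda>a. \<Phi> a b d)"
    and linear2: "\<And>a d. Vector_Spaces.linear s1 s2 (\<lambda>b. \<Phi> a b d)"
    and linear3: "\<And>a b. Vector_Spaces.linear s1 s2 (\<Phi> a b)"
  shows "(\<Sum>(a,b,d)\<leftarrow>xs. \<Phi> a b d) = (\<Sum>(a,b,d)\<leftarrow>ys. \<Phi> a b d)"
proof -
  let ?A = "fst ` set (xs @ ys) \<union> (fst \<circ> snd) ` set (xs @ ys) \<union> (snd \<circ> snd) ` set (xs @ ys)"
  obtain E f where E: "finite E" and f: "\<And>e. Vector_Spaces.linear s1 (*) (f e)"
    and coord: "\<And>a. a \<in> ?A \<Longrightarrow> a = (\<Sum>e\<in>E. f e a *a e)"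
    by (rule vs1.finite_set_linear_coordinates[of ?A]) auto
  have "\<Phi> a b d = (\<Sum>(e,e',e'')\<in>E \<times> E \<times> E. (f e a * f e' b * f e'' d) *b \<Phi> e e' e'')"
    if x: "(a,b,d) \<in> set xs \<union> set ys" for a b d
  proof -
    have "\<Phi> a b d = (\<Sum>e\<in>E. f e a *b \<Phi> e b d)"
      using linear1 coord x by (intro linear_eq_sum_coordinates) force+
    also have "\<dots> = (\<Sum>e\<in>E. \<Sum>e'\<in>E. \<Sum>e''\<in>E. (f e a * f e' b * f e'' d) *b \<Phi> e e' e'')"
    proof (rule sum.cong[OF refl])
      fix e
      have "\<Phi> e b d = (\<Sum>e'\<in>E. f e' b *b \<Phi> e e' d)"
        using linear2 coord x by (intro linear_eq_sum_coordinates) force+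
      moreover have "\<Phi> e e' d = (\<Sum>e''\<in>E. f e'' d *b \<Phi> e e' e'')" for e'
        using linear3 coord x by (intro linear_eq_sum_coordinates) force+
      ultimately show "f e a *b \<Phi> e b d
          = (\<Sum>e'\<in>E. \<Sum>e''\<in>E. (f e a * f e' b * f e'' d) *b \<Phi> e e' e'')"
        by (simp add: vs2.scale_sum_right mult.assoc)
    qed
    finally show ?thesis by (simp add: sum.cartesian_product)
  qed
  moreover have "(\<Sum>x\<leftarrow>xs. f e (fst x) * f e' (fst (snd x)) * f e'' (snd (snd x)))
      = (\<Sum>x\<leftarrow>ys. f e (fst x) * f e' (fst (snd x)) * f e'' (snd (snd x)))" for e e' e''
    using assms(1) f unfolding tensor3_eq_def by (simp add: split_def)
  ultimately show ?thesis
    using vs2.sum_list_eq_by_coordinates[of "E \<times> E \<times> E" xs ys "\<lambda>(a,b,d). \<Phi> a b d"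
        "\<lambda>(e,e',e'') x. f e (fst x) * f e' (fst (snd x)) * f e'' (snd (snd x))"
        "\<lambda>(e,e',e''). \<Phi> e e' e''"] E
    by (auto simp: split_def)
qed

lemma sum_list_concat: "sum_list (concat xss) = (\<Sum>xs\<leftarrow>xss. sum_list xs)"
  by (induction xss) simp_all

context hopf_algebra
begin

lemma linear_mult_left: "Vector_Spaces.linear sc sc (\<lambda>x. c * x)"
  using vector_space_axioms sc_mult_right by (simp add: linear_iff distrib_left)

lemma linear_mult_right: "Vector_Spaces.linear sc sc (\<lambda>x. x * c)"
  using vector_space_axioms sc_mult_left by (simp add: linear_iff distrib_right)

lemma linear_sum_Delta:
  assumes "vector_space s2"
    and "\<And>b. Vector_Spaces.linear sc s2 (\<lambda>a. G a b)"
    and "\<And>a. Vector_Spaces.linear sc s2 (G a)"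
  shows "Vector_Spaces.linear sc s2 (\<lambda>h. \<Sum>(a,b)\<leftarrow>Delta h. G a b)"
proof -
  interpret vector_space_pair sc s2
    by (simp add: vector_space_pair_def vector_space_axioms assms(1))
  have "(\<Sum>(a,b)\<leftarrow>Delta (x + y). G a b) = (\<Sum>(a,b)\<leftarrow>Delta x. G a b) + (\<Sum>(a,b)\<leftarrow>Delta y. G a b)"
    for x y
    using tensor2_eq_sum_bilinear[OF Delta_add[of x y] assms(2,3)] by simp
  moreover have "(\<Sum>(a,b)\<leftarrow>Delta (sc c x). G a b) = s2 c (\<Sum>(a,b)\<leftarrow>Delta x. G a b)" for c x
    using tensor2_eq_sum_bilinear[OF Delta_scale[of c x] assms(2,3)]
    by (simp add: linear_sum_list[OF vs2.linear_scale_self] linear_homogeneous[OF assms(2)]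
        split_def comp_def)
  ultimately show ?thesis using assms(1) by (simp add: linear_iff vector_space_axioms)
qed

lemma coassoc_sum:
  assumes "vector_space s2"
    and "\<And>b d. Vector_Spaces.linear sc s2 (\<lambda>a. \<Phi> a b d)"
    and "\<And>a d. Vector_Spaces.linear sc s2 (\<lambda>b. \<Phi> a b d)"
    and "\<And>a b. Vector_Spaces.linear sc s2 (\<Phi> a b)"
  shows "(\<Sum>(a,b)\<leftarrow>Delta h. \<Sum>(c,d)\<leftarrow>Delta a. \<Phi> c d b)
       = (\<Sum>(a,b)\<leftarrow>Delta h. \<Sum>(c,d)\<leftarrow>Delta b. \<Phi> a c d)"
proof -
  interpret vector_space_pair sc s2
    by (simp add: vector_space_pair_def vector_space_axioms assms(1))
  show ?thesis
    using tensor3_eq_sum_trilinear[OF coassoc[of h] assms(2-4)]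
    by (simp add: map_concat sum_list_concat comp_def split_def)
qed

end

locale hopf_module_endo = hopf_module sc Delta eps S scM act
  for sc :: "'k::field \<Rightarrow> 'h::ring_1 \<Rightarrow> 'h"
  and Delta :: "'h \<Rightarrow> ('h \<times> 'h) list"
  and eps :: "'h \<Rightarrow> 'k"
  and S :: "'h \<Rightarrow> 'h"
  and scM :: "'k \<Rightarrow> 'm::ab_group_add \<Rightarrow> 'm"
  and act :: "'h \<Rightarrow> 'm \<Rightarrow> 'm" +
  fixes T :: "'m \<Rightarrow> 'm"
  assumes T_linear: "Vector_Spaces.linear scM scM T"
begin

abbreviation twist :: "'h \<Rightarrow> 'm \<Rightarrow> 'm" where
  "twist \<equiv> T_twist Delta S act T"

lemmas linear_compose_intros =
  linear_compose'[OF S_linear] linear_compose'[OF linear_mult_right]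
  linear_compose'[OF linear_mult_left] linear_compose'[OF act_linear_left]
  linear_compose'[OF T_linear] act_linear_left act_linear_right

lemma twist_eq: "twist h m = (\<Sum>(a,b)\<leftarrow>Delta h. act a (T (act (S b) m)))"
  by (simp add: T_twist_def)

lemma linear_twist_left: "Vector_Spaces.linear sc scM (\<lambda>h. twist h m)"
  unfolding T_twist_def
  by (rule linear_sum_Delta[OF M_vs act_linear_left])
    (intro linear_compose_intros)

lemma linear_twist_right: "Vector_Spaces.linear scM scM (twist h)"
proof -
  have "Vector_Spaces.linear scM scM (\<lambda>m. \<Sum>x\<leftarrow>Delta h. (\<lambda>(a,b). act a (T (act (S b) m))) x)"
    by (rule linear_sum_list_fun[OF M_vs M_vs])
      (auto intro!: linear_compose'[OF act_linear_right] linear_compose_intros)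
  then show ?thesis unfolding T_twist_def by (simp add: split_def)
qed

lemma T_act_antipode: "T (act (S h) m) = (\<Sum>(a,b)\<leftarrow>Delta h. act (S a) (twist b m))"
proof -
  have "(\<Sum>(a,b)\<leftarrow>Delta h. act (S a) (twist b m))
      = (\<Sum>(a,b)\<leftarrow>Delta h. \<Sum>(c,d)\<leftarrow>Delta b. act (S a * c) (T (act (S d) m)))"
    by (simp add: twist_eq linear_sum_list_prod[OF act_linear_right] act_mult)
  also have "\<dots> = (\<Sum>(a,b)\<leftarrow>Delta h. \<Sum>(c,d)\<leftarrow>Delta a. act (S c * d) (T (act (S b) m)))"
    by (rule coassoc_sum[OF M_vs, symmetric]) (intro linear_compose_intros)+
  also have "\<dots> = (\<Sum>(a,b)\<leftarrow>Delta h. act (\<Sum>(c,d)\<leftarrow>Delta a. S c * d) (T (act (S b) m)))"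
    by (simp add: linear_sum_list_prod[OF act_linear_left])
  also have "\<dots> = (\<Sum>(a,b)\<leftarrow>Delta h. T (act (S (sc (eps a) b)) m))"
    by (simp add: antipode_left act_one linear_homogeneous[OF act_linear_left]
        linear_homogeneous[OF S_linear] linear_homogeneous[OF T_linear])
  also have "\<dots> = T (act (S (\<Sum>(a,b)\<leftarrow>Delta h. sc (eps a) b)) m)"
    by (rule linear_sum_list_prod[symmetric, of sc scM]) (intro linear_compose_intros T_linear)
  finally show ?thesis by (simp add: counit_left)
qed

lemma sum_twist_act: "(\<Sum>(a,b)\<leftarrow>Delta k. twist a (act b m)) = act k (T m)"
proof -
  have "(\<Sum>(a,b)\<leftarrow>Delta k. twist a (act b m))
      = (\<Sum>(a,b)\<leftarrow>Delta k. \<Sum>(c,d)\<leftarrow>Delta a. act c (T (act (S d * b) m)))"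
    by (simp add: twist_eq act_mult)
  also have "\<dots> = (\<Sum>(a,b)\<leftarrow>Delta k. \<Sum>(c,d)\<leftarrow>Delta b. act a (T (act (S c * d) m)))"
    by (rule coassoc_sum[OF M_vs]) (intro linear_compose_intros)+
  also have "\<dots> = (\<Sum>(a,b)\<leftarrow>Delta k. act a (T (act (\<Sum>(c,d)\<leftarrow>Delta b. S c * d) m)))"
    by (simp add: linear_sum_list_prod[OF act_linear_left] linear_sum_list_prod[OF T_linear]
        linear_sum_list_prod[OF act_linear_right])
  also have "\<dots> = (\<Sum>(a,b)\<leftarrow>Delta k. act (sc (eps b) a) (T m))"
    by (simp add: antipode_left act_one linear_homogeneous[OF act_linear_left]
        linear_homogeneous[OF act_linear_right] linear_homogeneous[OF T_linear])
  also have "\<dots> = act (\<Sum>(a,b)\<leftarrow>Delta k. sc (eps b) a) (T m)"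
    by (rule linear_sum_list_prod[symmetric]) (rule act_linear_left)
  finally show ?thesis by (simp add: counit_right)
qed

definition cotwist :: "'h \<Rightarrow> 'm \<Rightarrow> 'm" where
  "cotwist h m = (\<Sum>(a,b)\<leftarrow>Delta h. act (S a) (T (act b m)))"

end

locale twist_compatible_projection = hopf_module_endo +
  assumes T_idem: "\<And>m. T (T m) = T m"
    and T_twist_commute: "\<And>h m. twist h (T m) = T (twist h m)"
begin

lemma T_cotwist_commute: "T (cotwist h m) = cotwist h (T m)"
proof -
  have "T (cotwist h m) = (\<Sum>(a,b)\<leftarrow>Delta h. T (act (S a) (T (act b m))))"
    by (simp add: cotwist_def linear_sum_list_prod[OF T_linear])
  also have "\<dots> = (\<Sum>(a,b)\<leftarrow>Delta h. \<Sum>(c,d)\<leftarrow>Delta a. act (S c) (T (twist d (act b m))))"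
    by (simp add: T_act_antipode T_twist_commute)
  also have "\<dots> = (\<Sum>(a,b)\<leftarrow>Delta h. \<Sum>(c,d)\<leftarrow>Delta b. act (S a) (T (twist c (act d m))))"
    by (rule coassoc_sum[OF M_vs])
      (intro linear_compose'[OF linear_twist_left] linear_compose'[OF linear_twist_right]
        linear_compose_intros)+
  also have "\<dots> = (\<Sum>(a,b)\<leftarrow>Delta h. act (S a) (T (\<Sum>(c,d)\<leftarrow>Delta b. twist c (act d m))))"
    by (simp add: linear_sum_list_prod[OF act_linear_right] linear_sum_list_prod[OF T_linear])
  also have "\<dots> = cotwist h (T m)"
    by (simp add: sum_twist_act cotwist_def)
  finally show ?thesis .
qed

abbreviation \<pi> where
  "\<pi> h m \<equiv> T (act h m)"

lemma T_fixes_range: "v \<in> range T \<Longrightarrow> T v = v"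
  using T_idem by auto

lemma pi_mult_Delta_antipode:
  assumes "v \<in> range T"
  shows "(\<Sum>(a,b)\<leftarrow>Delta k. \<pi> h (\<pi> a (\<pi> (S b) v))) = (\<Sum>(a,b)\<leftarrow>Delta k. \<pi> (h * a) (\<pi> (S b) v))"
proof -
  have "(\<Sum>(a,b)\<leftarrow>Delta k. \<pi> h (\<pi> a (\<pi> (S b) v))) = \<pi> h (T (twist k v))"
    by (simp add: twist_eq linear_sum_list_prod[OF T_linear] linear_sum_list_prod[OF act_linear_right])
  also have "\<dots> = \<pi> h (twist k v)"
    by (metis T_twist_commute T_fixes_range[OF assms])
  also have "\<dots> = (\<Sum>(a,b)\<leftarrow>Delta k. \<pi> (h * a) (\<pi> (S b) v))"
    by (simp add: twist_eq linear_sum_list_prod[OF T_linear] linear_sum_list_prod[OF act_linear_right]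
        act_mult)
  finally show ?thesis .
qed

lemma pi_Delta_antipode_mult:
  "(\<Sum>(a,b)\<leftarrow>Delta h. \<pi> a (\<pi> (S b) (\<pi> k v))) = (\<Sum>(a,b)\<leftarrow>Delta h. \<pi> a (\<pi> (S b * k) v))"
proof -
  have "(\<Sum>(a,b)\<leftarrow>Delta h. \<pi> a (\<pi> (S b) (\<pi> k v))) = T (twist h (T (act k v)))"
    by (simp add: twist_eq linear_sum_list_prod[OF T_linear])
  also have "\<dots> = T (twist h (act k v))"
    by (simp add: T_twist_commute T_idem)
  also have "\<dots> = (\<Sum>(a,b)\<leftarrow>Delta h. \<pi> a (\<pi> (S b * k) v))"
    by (simp add: twist_eq linear_sum_list_prod[OF T_linear] act_mult)
  finally show ?thesis .
qed

lemma pi_mult_antipode_Delta: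
  assumes "v \<in> range T"
  shows "(\<Sum>(a,b)\<leftarrow>Delta k. \<pi> h (\<pi> (S a) (\<pi> b v))) = (\<Sum>(a,b)\<leftarrow>Delta k. \<pi> (h * S a) (\<pi> b v))"
proof -
  have "(\<Sum>(a,b)\<leftarrow>Delta k. \<pi> h (\<pi> (S a) (\<pi> b v))) = \<pi> h (T (cotwist k v))"
    by (simp add: cotwist_def linear_sum_list_prod[OF T_linear]
        linear_sum_list_prod[OF act_linear_right])
  also have "\<dots> = \<pi> h (cotwist k v)"
    by (metis T_cotwist_commute T_fixes_range[OF assms])
  also have "\<dots> = (\<Sum>(a,b)\<leftarrow>Delta k. \<pi> (h * S a) (\<pi> b v))"
    by (simp add: cotwist_def linear_sum_list_prod[OF T_linear]
        linear_sum_list_prod[OF act_linear_right] act_mult)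
  finally show ?thesis .
qed

lemma pi_antipode_Delta_mult:
  "(\<Sum>(a,b)\<leftarrow>Delta h. \<pi> (S a) (\<pi> b (\<pi> k v))) = (\<Sum>(a,b)\<leftarrow>Delta h. \<pi> (S a) (\<pi> (b * k) v))"
proof -
  have "(\<Sum>(a,b)\<leftarrow>Delta h. \<pi> (S a) (\<pi> b (\<pi> k v))) = T (cotwist h (T (act k v)))"
    by (simp add: cotwist_def linear_sum_list_prod[OF T_linear])
  also have "\<dots> = T (cotwist h (act k v))"
    by (simp add: T_cotwist_commute T_idem)
  also have "\<dots> = (\<Sum>(a,b)\<leftarrow>Delta h. \<pi> (S a) (\<pi> (b * k) v))"
    by (simp add: cotwist_def linear_sum_list_prod[OF T_linear] act_mult)
  finally show ?thesis .
qed

lemma subspace_range_T: "module.subspace scM (range T)"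
proof -
  interpret M: vector_space scM by (rule M_vs)
  show ?thesis
    unfolding M.subspace_def
  proof (intro conjI ballI allI)
    show "0 \<in> range T"
      using rangeI[of T 0] by (simp add: linear_zero'[OF T_linear])
  next
    fix x y assume "x \<in> range T" "y \<in> range T"
    then obtain a b where "x = T a" "y = T b" by blast
    then show "x + y \<in> range T"
      using rangeI[of T "a + b"] by (simp add: linear_additive[OF T_linear])
  next
    fix c x assume "x \<in> range T"
    then obtain a where "x = T a" by blast
    then show "scM c x \<in> range T"
      using rangeI[of T "scM c a"] by (simp add: linear_homogeneous[OF T_linear])
  qed
qed

theorem partial_rep_range_T: "partial_rep sc Delta S scM (range T) \<pi>"
  unfolding partial_rep_def
proof (intro conjI allI ballI)
  show "module.subspace scM (range T)" by (rule subspace_range_T)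
next
  fix h v show "\<pi> h v \<in> range T" by (rule rangeI)
next
  fix h v w show "\<pi> h (v + w) = \<pi> h v + \<pi> h w"
    by (simp add: linear_additive[OF T_linear] linear_additive[OF act_linear_right])
next
  fix h c v show "\<pi> h (scM c v) = scM c (\<pi> h v)"
    by (simp add: linear_homogeneous[OF T_linear] linear_homogeneous[OF act_linear_right])
next
  fix x y v show "\<pi> (x + y) v = \<pi> x v + \<pi> y v"
    by (simp add: linear_additive[OF T_linear] linear_additive[OF act_linear_left])
next
  fix x c v show "\<pi> (sc c x) v = scM c (\<pi> x v)"
    by (simp add: linear_homogeneous[OF T_linear] linear_homogeneous[OF act_linear_left])
next
  fix v assume "v \<in> range T"
  then show "\<pi> 1 v = v" by (simp only: act_one T_fixes_range)
qed (erule pi_mult_Delta_antipode pi_mult_antipode_Delta | rule pi_Delta_antipode_mult pi_antipode_Delta_mult)+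

end

theorem mainTheorem6:
  fixes sc :: "'k::field \<Rightarrow> 'h::ring_1 \<Rightarrow> 'h"
    and Delta :: "'h \<Rightarrow> ('h \<times> 'h) list"
    and eps :: "'h \<Rightarrow> 'k"
    and S :: "'h \<Rightarrow> 'h"
    and scM :: "'k \<Rightarrow> 'm::ab_group_add \<Rightarrow> 'm"
    and act :: "'h \<Rightarrow> 'm \<Rightarrow> 'm"
    and T :: "'m \<Rightarrow> 'm"
  assumes "hopf_module sc Delta eps S scM act"
    and "Vector_Spaces.linear scM scM T"
    and "\<And>m. T (T m) = T m"
    and "\<And>h m. T_twist Delta S act T h (T m) = T (T_twist Delta S act T h m)"
  shows "partial_rep sc Delta S scM (range T) (\<lambda>h m. T (act h m))"
proof -
  interpret twist_compatible_projection sc Delta eps S scM act T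
    using assms
    by (simp add: twist_compatible_projection_def twist_compatible_projection_axioms_def
        hopf_module_endo_def hopf_module_endo_axioms_def)
  show ?thesis by (rule partial_rep_range_T)
qed

end
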